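(* Let $X=[0,1]^2$ with the order $(x_1,y_1)\prec(x_2,y_2)$ iff $x_1\le x_2$ and $y_1\le y_2$, let $\mu$ be the uniform distribution on $X$, and consider the threshold rule based on a nonincreasing sequence $\{c_i\}$ in $(0,1]$. Let $z=|S_n\cap\mathcal{X}_n|$ and let $\mathcal{E}'_n$ be the event that at least one sample in $R_n$ does not lie in $\mathcal{D}(S_n\cap\mathcal{X}_n)$. Then, conditioned on $z$, \[\Pr[\mathcal{E}'_n]\le\exp\left\{-\frac{z\,c_n}{\mu(\mathcal{X}_n)}\right\}\cdot E[|R_n|].\]
   Context: For $x\in X$ let $\mathcal{D}(x)=\{y: y\prec x\}$, $\mathcal{U}(x)=\{y: x\prec y\}$, and $\mathcal{D}(S)=\bigcup_{x\in S}\mathcal{D}(x)$. The threshold rule is $\mathcal{X}_0=X$, $\mathcal{X}_i=\{x\in X:\mu(\mathcal{U}(x))\le c_i\}$ for $i\ge1$. Samples $x_1,x_2,\dots$ are i.i.d. from $\mu$; sample $x_t$ is selected iff $x_t\in\mathcal{X}_j$, where $j$ is the number of samples selected among $x_1,\dots,x_{t-1}$. $T_n$ is the index of the $n$-th selected sample, $S_n$ the set of $n$ selected samples, and $R_n=\{x_1,\dots,x_{T_n}\}\setminus S_n$ the rejected samples. *)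

theory Defs
  imports "HOL-Probability.Probability"
begin

definition Xbox :: "(real \<times> real) set" where
  "Xbox = {0..1} \<times> {0..1}"

definition prec :: "real \<times> real \<Rightarrow> real \<times> real \<Rightarrow> bool" where
  "prec p q \<longleftrightarrow> fst p \<le> fst q \<and> snd p \<le> snd q"

definition mu :: "(real \<times> real) measure" where
  "mu = uniform_measure lborel Xbox"

definition Dn :: "real \<times> real \<Rightarrow> (real \<times> real) set" where
  "Dn x = {y \<in> Xbox. prec y x}"

definition Up :: "real \<times> real \<Rightarrow> (real \<times> real) set" where
  "Up x = {y \<in> Xbox. prec x y}"

definition DS :: "(real \<times> real) set \<Rightarrow> (real \<times> real) set" where
  "DS S = (\<Union>x\<in>S. Dn x)"

definition thr_set :: "(nat \<Rightarrow> real) \<Rightarrow> nat \<Rightarrow> (real \<times> real) set" where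
  "thr_set c i = (if i = 0 then Xbox else {x \<in> Xbox. measure mu (Up x) \<le> c i})"

text \<open>Samples are w 0, w 1, ... (w t is the paper's x_{t+1}).
  nsel c w t = number of samples selected among the first t samples.\<close>
fun nsel :: "(nat \<Rightarrow> real) \<Rightarrow> (nat \<Rightarrow> real \<times> real) \<Rightarrow> nat \<Rightarrow> nat" where
  "nsel c w 0 = 0"
| "nsel c w (Suc t) = nsel c w t + (if w t \<in> thr_set c (nsel c w t) then 1 else 0)"

definition selected :: "(nat \<Rightarrow> real) \<Rightarrow> (nat \<Rightarrow> real \<times> real) \<Rightarrow> nat \<Rightarrow> bool" where
  "selected c w t \<longleftrightarrow> w t \<in> thr_set c (nsel c w t)"

text \<open>T_n: the n-th selected sample is the paper's x_{T_n}, i.e. w (T_n - 1).\<close>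
definition Tn :: "(nat \<Rightarrow> real) \<Rightarrow> (nat \<Rightarrow> real \<times> real) \<Rightarrow> nat \<Rightarrow> nat" where
  "Tn c w n = (LEAST t. nsel c w t = n)"

definition Sset :: "(nat \<Rightarrow> real) \<Rightarrow> (nat \<Rightarrow> real \<times> real) \<Rightarrow> nat \<Rightarrow> (real \<times> real) set" where
  "Sset c w n = {w t | t. t < Tn c w n \<and> selected c w t}"

definition Rset :: "(nat \<Rightarrow> real) \<Rightarrow> (nat \<Rightarrow> real \<times> real) \<Rightarrow> nat \<Rightarrow> (real \<times> real) set" where
  "Rset c w n = w ` {..<Tn c w n} - Sset c w n"

definition sample_space :: "(nat \<Rightarrow> real \<times> real) measure" where
  "sample_space = PiM UNIV (\<lambda>_::nat. mu)"

end

theory Submission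
  imports Defs
begin

text \<open>
  Condition on the selection pattern, i.e.\ on which of the samples before \<open>T\<^sub>n\<close> are selected.
  Given the pattern, the samples are independent and each is uniform on the set the pattern
  prescribes: \<open>\<X>\<^sub>j\<close> or its complement, \<open>j\<close> being the number of earlier selections.
  A rejected sample \<open>r\<close> of phase \<open>j < n\<close> lies outside \<open>\<X>\<^sub>j \<supseteq> \<X>\<^sub>n\<close>, so the points of \<open>\<X>\<^sub>n\<close>
  above \<open>r\<close> contain a rectangle of measure \<open>c\<^sub>n\<close>; hence each of the \<open>z\<close> selected samples in
  \<open>\<X>\<^sub>n\<close> misses \<open>r\<close> with probability at most \<open>q = 1 - c\<^sub>n/\<mu>(\<X>\<^sub>n) \<le> exp(-c\<^sub>n/\<mu>(\<X>\<^sub>n))\<close>, and a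
  union bound over the rejected samples gives \<open>|R\<^sub>n| q\<^sup>z\<close>.
  The probability of a pattern \<open>b\<close> is \<open>\<pi>\<^sub>b M\<close> and that of the pattern together with \<open>z = k\<close> is
  \<open>\<pi>\<^sub>b Q\<^sub>k\<close>, where \<open>\<pi>\<^sub>b\<close> collects the rejected positions and \<open>M\<close>, \<open>Q\<^sub>k\<close> do not depend on \<open>b\<close>
  (\<open>rejection_prob\<close>, \<open>phase_prob\<close> and \<open>z_phase_prob\<close> below).
  Summing over patterns, \<open>\<Sum>\<^sub>b \<pi>\<^sub>b M = 1\<close>, \<open>E|R\<^sub>n| = \<Sum>\<^sub>b |R\<^sub>b| \<pi>\<^sub>b M\<close> and \<open>Pr[z = k] = \<Sum>\<^sub>b \<pi>\<^sub>b Q\<^sub>k\<close>,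
  which turns \<open>q\<^sup>k \<Sum>\<^sub>b |R\<^sub>b| \<pi>\<^sub>b Q\<^sub>k\<close> into the stated product.
\<close>

lemma sets_Xbox [measurable]: "Xbox \<in> sets borel"
  unfolding Xbox_def by (simp add: borel_Times)

lemma emeasure_lborel_Times_Icc:
  fixes a b a' b' :: real
  assumes "a \<le> b" "a' \<le> b'"
  shows "emeasure lborel ({a..b} \<times> {a'..b'}) = ennreal ((b - a) * (b' - a'))"
proof -
  have "emeasure (lborel \<Otimes>\<^sub>M lborel) ({a..b} \<times> {a'..b'}) = ennreal ((b - a) * (b' - a'))"
    using assms
    by (subst sigma_finite_measure.emeasure_pair_measure_Times)
       (auto intro: lborel.sigma_finite_measure_axioms simp: ennreal_mult)
  then show ?thesis unfolding lborel_prod .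
qed

lemma emeasure_lborel_Xbox: "emeasure lborel Xbox = 1"
  using emeasure_lborel_Times_Icc[of 0 1 0 1] by (simp add: Xbox_def)

lemma prob_space_mu: "prob_space mu"
  unfolding mu_def by (rule prob_space_uniform_measure) (auto simp: emeasure_lborel_Xbox)

interpretation mu: prob_space mu
  by (rule prob_space_mu)

lemma sets_mu [simp, measurable_cong]: "sets mu = sets borel"
  and space_mu [simp]: "space mu = UNIV"
  unfolding mu_def by auto

lemma emeasure_mu: "A \<in> sets borel \<Longrightarrow> emeasure mu A = emeasure lborel (Xbox \<inter> A)"
  unfolding mu_def by (simp add: emeasure_lborel_Xbox divide_ennreal_def)

lemma measure_mu_Times_Icc:
  fixes a b a' b' :: real
  assumes "0 \<le> a" "a \<le> b" "b \<le> 1" "0 \<le> a'" "a' \<le> b'" "b' \<le> 1"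
  shows "measure mu ({a..b} \<times> {a'..b'}) = (b - a) * (b' - a')"
proof -
  have "Xbox \<inter> ({a..b} \<times> {a'..b'}) = {a..b} \<times> {a'..b'}"
    using assms unfolding Xbox_def by auto
  then have "emeasure mu ({a..b} \<times> {a'..b'}) = ennreal ((b - a) * (b' - a'))"
    using assms by (simp add: emeasure_mu borel_Times emeasure_lborel_Times_Icc)
  then show ?thesis using assms unfolding measure_def by simp
qed

lemma measure_mu_Up: "x \<in> Xbox \<Longrightarrow> measure mu (Up x) = (1 - fst x) * (1 - snd x)"
proof -
  assume "x \<in> Xbox"
  then have "Up x = {fst x..1} \<times> {snd x..1}" and "fst x \<in> {0..1}" "snd x \<in> {0..1}"
    unfolding Up_def Xbox_def prec_def by (cases x; auto)+
  then show ?thesis by (simp add: measure_mu_Times_Icc)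
qed

lemma thr_set_eq: "i \<noteq> 0 \<Longrightarrow> thr_set c i = {x \<in> Xbox. (1 - fst x) * (1 - snd x) \<le> c i}"
  unfolding thr_set_def by (auto simp: measure_mu_Up)

lemma sets_thr_set [measurable]: "thr_set c i \<in> sets borel"
proof (cases "i = 0")
  case False
  have "closed {x :: real \<times> real. (1 - fst x) * (1 - snd x) \<le> c i}"
    by (intro closed_Collect_le continuous_intros)
  then have "Xbox \<inter> {x. (1 - fst x) * (1 - snd x) \<le> c i} \<in> sets borel"
    by (intro sets.Int sets_Xbox borel_closed)
  moreover have "thr_set c i = Xbox \<inter> {x. (1 - fst x) * (1 - snd x) \<le> c i}"
    using False by (auto simp: thr_set_eq)
  ultimately show ?thesis by simp
qed (simp add: thr_set_def)

lemma AE_mu_Xbox: "AE x in mu. x \<in> Xbox"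
  by (rule AE_I'[where N = "UNIV - Xbox"]) (auto simp: null_sets_def emeasure_mu)

lemma emeasure_mu_singleton: "emeasure mu {y} = 0"
  by (simp add: emeasure_mu emeasure_lborel_countable)

interpretation samples: product_prob_space "\<lambda>_ :: nat. mu" UNIV
  using prob_space_mu unfolding product_prob_space_def product_sigma_finite_def
  by (auto simp: prob_space_imp_sigma_finite intro: product_prob_space_axioms.intro)

lemma space_sample_space [simp]: "space sample_space = UNIV"
  unfolding sample_space_def by (simp add: space_PiM)

lemma prob_space_sample_space: "prob_space sample_space"
  unfolding sample_space_def by (rule samples.P.prob_space_axioms)

lemma nn_integral_sample_space_finite:
  assumes "finite J" and G: "G \<in> borel_measurable (PiM J (\<lambda>_. mu))"
    and local: "\<And>w. G (restrict w J) = G w"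
  shows "(\<integral>\<^sup>+w. G w \<partial>sample_space) = (\<integral>\<^sup>+x. G x \<partial>PiM J (\<lambda>_. mu))"
proof -
  have restrict: "(\<lambda>w. restrict w J) \<in> measurable (PiM UNIV (\<lambda>_. mu)) (PiM J (\<lambda>_. mu))"
    by (rule measurable_restrict_subset) auto
  have "(\<integral>\<^sup>+w. G w \<partial>sample_space) = (\<integral>\<^sup>+w. G (restrict w J) \<partial>PiM UNIV (\<lambda>_. mu))"
    unfolding sample_space_def using local by simp
  also have "\<dots> = (\<integral>\<^sup>+x. G x \<partial>distr (PiM UNIV (\<lambda>_. mu)) (PiM J (\<lambda>_. mu)) (\<lambda>w. restrict w J))"
    by (rule nn_integral_distr[symmetric, OF restrict]) (simp add: G)
  also have "\<dots> = (\<integral>\<^sup>+x. G x \<partial>PiM J (\<lambda>_. mu))"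
    using \<open>finite J\<close> by (subst samples.distr_PiM_restrict_finite) auto
  finally show ?thesis .
qed

lemma nn_integral_PiM_prod_indicator:
  fixes I :: "nat set"
  assumes "finite I" "\<And>t. t \<in> I \<Longrightarrow> D t \<in> sets borel"
  shows "(\<integral>\<^sup>+x. (\<Prod>t\<in>I. indicator (D t) (x t)) \<partial>PiM I (\<lambda>_. mu)) = (\<Prod>t\<in>I. emeasure mu (D t))"
proof -
  have "(\<integral>\<^sup>+x. (\<Prod>t\<in>I. indicator (D t) (x t)) \<partial>PiM I (\<lambda>_. mu))
      = (\<Prod>t\<in>I. integral\<^sup>N mu (indicator (D t)))"
    by (rule samples.product_nn_integral_prod[where f = "\<lambda>t. indicator (D t)"]) (use assms in auto)
  also have "\<dots> = (\<Prod>t\<in>I. emeasure mu (D t))"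
    using assms by (intro prod.cong refl nn_integral_indicator) auto
  finally show ?thesis .
qed

lemma nn_integral_sample_space_prod_indicator:
  assumes "\<And>t. t < L \<Longrightarrow> D t \<in> sets borel"
  shows "(\<integral>\<^sup>+w. (\<Prod>t<L. indicator (D t) (w t)) \<partial>sample_space) = (\<Prod>t<L. emeasure mu (D t))"
  using assms
  by (subst nn_integral_sample_space_finite[where J = "{..<L}"])
     (auto intro: nn_integral_PiM_prod_indicator)

lemma prod_indicator_lessThan:
  fixes L :: nat
  shows "(\<Prod>t<L. indicator (D t) (w t) :: ennreal) = (if \<forall>t<L. w t \<in> D t then 1 else 0)"
  by (induction L) (auto simp: indicator_def lessThan_Suc less_Suc_eq)

lemma borel_measurable_prod_indicator:
  fixes L :: nat
  shows "(\<And>t. D t \<in> sets borel) \<Longrightarrow>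
    (\<lambda>w. \<Prod>t<L. indicator (D t) (w t) :: ennreal) \<in> borel_measurable sample_space"
  unfolding sample_space_def by (intro borel_measurable_prod_ennreal) auto

lemma nn_integral_sample_space_insert:
  assumes J: "finite J" "t\<^sub>0 \<in> J" and G: "G \<in> borel_measurable (PiM J (\<lambda>_. mu))"
    and local: "\<And>w. G (restrict w J) = G w"
  shows "(\<integral>\<^sup>+w. G w \<partial>sample_space)
       = (\<integral>\<^sup>+y. (\<integral>\<^sup>+x. G (x(t\<^sub>0 := y)) \<partial>PiM (J - {t\<^sub>0}) (\<lambda>_. mu)) \<partial>mu)"
proof -
  have J_eq: "J = insert t\<^sub>0 (J - {t\<^sub>0})" using J by auto
  have "(\<integral>\<^sup>+w. G w \<partial>sample_space) = (\<integral>\<^sup>+x. G x \<partial>PiM (insert t\<^sub>0 (J - {t\<^sub>0})) (\<lambda>_. mu))"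
    using nn_integral_sample_space_finite[OF J(1) G local] J_eq by simp
  also have "\<dots> = (\<integral>\<^sup>+y. (\<integral>\<^sup>+x. G (x(t\<^sub>0 := y)) \<partial>PiM (J - {t\<^sub>0}) (\<lambda>_. mu)) \<partial>mu)"
    using J G J_eq by (subst samples.product_nn_integral_insert_rev) auto
  finally show ?thesis .
qed

lemma nn_integral_sample_space_prod_indicator_dependent:
  fixes L :: nat
  assumes "t\<^sub>0 < L" and sets: "\<And>y t. D y t \<in> sets borel"
    and meas: "(\<lambda>w. \<Prod>t<L. indicator (D (w t\<^sub>0) t) (w t) :: ennreal) \<in> borel_measurable (PiM {..<L} (\<lambda>_. mu))"
  shows "(\<integral>\<^sup>+w. (\<Prod>t<L. indicator (D (w t\<^sub>0) t) (w t)) \<partial>sample_space)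
       = (\<integral>\<^sup>+y. indicator (D y t\<^sub>0) y * (\<Prod>t\<in>{..<L} - {t\<^sub>0}. emeasure mu (D y t)) \<partial>mu)"
proof -
  let ?G = "\<lambda>w. (\<Prod>t<L. indicator (D (w t\<^sub>0) t) (w t)) :: ennreal"
  have "(\<integral>\<^sup>+w. ?G w \<partial>sample_space)
      = (\<integral>\<^sup>+y. (\<integral>\<^sup>+x. ?G (x(t\<^sub>0 := y)) \<partial>PiM ({..<L} - {t\<^sub>0}) (\<lambda>_. mu)) \<partial>mu)"
    using assms by (intro nn_integral_sample_space_insert) (auto intro: prod.cong)
  also have "\<dots> = (\<integral>\<^sup>+y. indicator (D y t\<^sub>0) y * (\<Prod>t\<in>{..<L} - {t\<^sub>0}. emeasure mu (D y t)) \<partial>mu)"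
  proof (rule nn_integral_cong)
    fix y
    have "?G (x(t\<^sub>0 := y)) = indicator (D y t\<^sub>0) y * (\<Prod>t\<in>{..<L} - {t\<^sub>0}. indicator (D y t) (x t))" for x
    proof -
      have "?G (x(t\<^sub>0 := y))
          = indicator (D y t\<^sub>0) y * (\<Prod>t\<in>{..<L} - {t\<^sub>0}. indicator (D y t) ((x(t\<^sub>0 := y)) t))"
        using \<open>t\<^sub>0 < L\<close> by (subst prod.remove[of _ t\<^sub>0]) auto
      also have "(\<Prod>t\<in>{..<L} - {t\<^sub>0}. indicator (D y t) ((x(t\<^sub>0 := y)) t))
          = (\<Prod>t\<in>{..<L} - {t\<^sub>0}. indicator (D y t) (x t))"
        by (intro prod.cong) auto
      finally show ?thesis .
    qed
    then have "(\<integral>\<^sup>+x. ?G (x(t\<^sub>0 := y)) \<partial>PiM ({..<L} - {t\<^sub>0}) (\<lambda>_. mu))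
        = indicator (D y t\<^sub>0) y
          * (\<integral>\<^sup>+x. (\<Prod>t\<in>{..<L} - {t\<^sub>0}. indicator (D y t) (x t)) \<partial>PiM ({..<L} - {t\<^sub>0}) (\<lambda>_. mu))"
      using sets by (simp only:) (intro nn_integral_cmult borel_measurable_prod_ennreal, auto)
    also have "\<dots> = indicator (D y t\<^sub>0) y * (\<Prod>t\<in>{..<L} - {t\<^sub>0}. emeasure mu (D y t))"
      using sets by (subst nn_integral_PiM_prod_indicator) auto
    finally show "(\<integral>\<^sup>+x. ?G (x(t\<^sub>0 := y)) \<partial>PiM ({..<L} - {t\<^sub>0}) (\<lambda>_. mu))
        = indicator (D y t\<^sub>0) y * (\<Prod>t\<in>{..<L} - {t\<^sub>0}. emeasure mu (D y t))" .
  qed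
  finally show ?thesis .
qed

lemma AE_sample_space_Xbox: "AE w in sample_space. \<forall>t. w t \<in> Xbox"
  unfolding AE_all_countable sample_space_def by (auto intro: samples.AE_component AE_mu_Xbox)

lemma null_sets_sample_space_eq:
  assumes "a \<noteq> b"
  shows "{w. w a = w b} \<in> null_sets sample_space"
proof -
  have S: "{w. w a = w b} \<in> sets sample_space"
  proof -
    have "{w \<in> space sample_space. w a = w b} \<in> sets sample_space"
      unfolding sample_space_def by measurable
    then show ?thesis by simp
  qed
  let ?G = "\<lambda>w :: nat \<Rightarrow> real \<times> real. indicator {w. w a = w b} w :: ennreal"
  have "emeasure sample_space {w. w a = w b} = (\<integral>\<^sup>+w. ?G w \<partial>sample_space)"
    using S by simp
  also have "\<dots> = (\<integral>\<^sup>+y. (\<integral>\<^sup>+x. ?G (x(a := y)) \<partial>PiM ({a, b} - {a}) (\<lambda>_. mu)) \<partial>mu)"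
  proof (rule nn_integral_sample_space_insert)
    have "{w \<in> space (PiM {a, b} (\<lambda>_. mu)). w a = w b} \<in> sets (PiM {a, b} (\<lambda>_. mu))"
      by measurable
    then show "?G \<in> borel_measurable (PiM {a, b} (\<lambda>_. mu))"
      using borel_measurable_indicator'[where f = "\<lambda>x. x" and A = "\<lambda>_. {w. w a = w b}"
          and M = "PiM {a, b} (\<lambda>_. mu)"]
      by (simp add: space_PiM)
  qed (auto simp: indicator_def)
  also have "\<dots> = (\<integral>\<^sup>+y. 0 \<partial>mu)"
  proof (rule nn_integral_cong)
    fix y
    have pair_minus: "{a, b} - {a} = {b}" using assms by auto
    have "(\<integral>\<^sup>+x. ?G (x(a := y)) \<partial>PiM ({a, b} - {a}) (\<lambda>_. mu))
        = (\<integral>\<^sup>+x. (\<Prod>t\<in>{b}. indicator {y} (x t)) \<partial>PiM {b} (\<lambda>_. mu))"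
      unfolding pair_minus using assms by (intro nn_integral_cong) (auto simp: indicator_def)
    also have "\<dots> = 0"
      by (subst nn_integral_PiM_prod_indicator) (auto simp: emeasure_mu_singleton)
    finally show "(\<integral>\<^sup>+x. ?G (x(a := y)) \<partial>PiM ({a, b} - {a}) (\<lambda>_. mu)) = 0" .
  qed
  finally show ?thesis using S by auto
qed

lemma AE_sample_space_inj: "AE w in sample_space. inj w"
proof -
  have "AE w in sample_space. \<forall>p :: nat \<times> nat. fst p \<noteq> snd p \<longrightarrow> w (fst p) \<noteq> w (snd p)"
    unfolding AE_all_countable
  proof
    fix p :: "nat \<times> nat"
    show "AE w in sample_space. fst p \<noteq> snd p \<longrightarrow> w (fst p) \<noteq> w (snd p)"
      by (cases "fst p = snd p") (auto intro: AE_I'[OF null_sets_sample_space_eq])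
  qed
  then show ?thesis by (rule AE_mp) (auto simp: inj_def)
qed

lemma borel_measurable_fst_component:
  "t \<in> I \<Longrightarrow> (\<lambda>x. fst (x t)) \<in> borel_measurable (PiM I (\<lambda>_. mu))"
  and borel_measurable_snd_component:
  "t \<in> I \<Longrightarrow> (\<lambda>x. snd (x t)) \<in> borel_measurable (PiM I (\<lambda>_. mu))"
proof -
  have "(fst :: real \<times> real \<Rightarrow> real) \<in> borel_measurable mu"
    "(snd :: real \<times> real \<Rightarrow> real) \<in> borel_measurable mu"
    by (simp_all add: measurable_cong_sets[OF sets_mu refl] borel_measurable_continuous_onI
        continuous_on_fst continuous_on_snd continuous_on_id)
  then show "t \<in> I \<Longrightarrow> (\<lambda>x. fst (x t)) \<in> borel_measurable (PiM I (\<lambda>_. mu))"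
    "t \<in> I \<Longrightarrow> (\<lambda>x. snd (x t)) \<in> borel_measurable (PiM I (\<lambda>_. mu))"
    using measurable_compose[OF measurable_component_singleton[of t I "\<lambda>_. mu"]] by auto
qed

lemma measurable_nsel: "(\<lambda>w. nsel c w t) \<in> measurable sample_space (count_space UNIV)"
proof (induction t)
  case (Suc t)
  have "(\<lambda>w. w t \<in> thr_set c (nsel c w t)) \<in> measurable sample_space (count_space UNIV)"
    by (rule measurable_compose_countable[where f = "\<lambda>j w. w t \<in> thr_set c j", OF _ Suc])
       (simp add: sample_space_def)
  with Suc show ?case by simp
qed simp

lemma measurable_selected: "(\<lambda>w. selected c w t) \<in> measurable sample_space (count_space UNIV)"
  unfolding selected_def
  by (rule measurable_compose_countable[where f = "\<lambda>j w. w t \<in> thr_set c j", OF _ measurable_nsel])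
     (simp add: sample_space_def)

lemma measurable_Tn: "(\<lambda>w. Tn c w n) \<in> measurable sample_space (count_space UNIV)"
  unfolding Tn_def
proof (rule measurable_Least)
  fix i
  note [measurable] = measurable_nsel[of c i]
  show "(\<lambda>w. nsel c w i = n) \<in> measurable sample_space (count_space UNIV)" by measurable
qed

definition selected_before :: "(nat \<Rightarrow> real) \<Rightarrow> (nat \<Rightarrow> real \<times> real) \<Rightarrow> nat \<Rightarrow> (real \<times> real) set" where
  "selected_before c w T = {w t | t. t < T \<and> selected c w t}"

lemma Sset_eq_selected_before: "Sset c w n = selected_before c w (Tn c w n)"
  by (simp add: Sset_def selected_before_def)

lemma card_selected_before_Suc_Int:
  "card (selected_before c w (Suc T) \<inter> Y) = card (selected_before c w T \<inter> Y)
     + (if selected c w T \<and> w T \<in> Y \<and> (\<forall>t<T. selected c w t \<longrightarrow> w t \<noteq> w T) then 1 else 0)"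
proof -
  have finite: "finite (selected_before c w T \<inter> Y)"
    by (rule finite_subset[of _ "w ` {..<T}"]) (auto simp: selected_before_def)
  have "selected_before c w (Suc T) \<inter> Y
      = (if selected c w T \<and> w T \<in> Y then insert (w T) else id) (selected_before c w T \<inter> Y)"
    by (auto simp: selected_before_def less_Suc_eq)
  moreover have "w T \<in> selected_before c w T \<longleftrightarrow> \<not> (\<forall>t<T. selected c w t \<longrightarrow> w t \<noteq> w T)"
    by (auto simp: selected_before_def) metis
  ultimately show ?thesis using finite by (auto simp: card_insert_if)
qed

lemma measurable_card_selected_before_Int:
  assumes [measurable]: "Y \<in> sets borel"
  shows "(\<lambda>w. card (selected_before c w T \<inter> Y)) \<in> measurable sample_space (count_space UNIV)"
proof (induction T)
  case 0
  then show ?case by (simp add: selected_before_def)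
next
  case (Suc T)
  have component: "(\<lambda>w. w t) \<in> borel_measurable sample_space" for t
    using measurable_component_singleton[of t UNIV "\<lambda>_. mu"]
    by (simp add: sample_space_def measurable_cong_sets[OF refl sets_mu[symmetric]])
  have "Measurable.pred sample_space (\<lambda>w. w t = w T)" for t
    using measurable_equality_set[OF component component] by (simp add: Measurable.pred_def)
  note [measurable] = Suc measurable_selected this
  have "Measurable.pred sample_space (\<lambda>w. w T \<in> Y)"
    unfolding sample_space_def by measurable
  note [measurable] = this
  show ?case unfolding card_selected_before_Suc_Int by measurable
qed

lemma sets_card_Sset_Int:
  assumes "Y \<in> sets borel"
  shows "{w \<in> space sample_space. card (Sset c w n \<inter> Y) = k} \<in> sets sample_space"
proof -
  have "(\<lambda>w. card (selected_before c w (Tn c w n) \<inter> Y)) \<in> measurable sample_space (count_space UNIV)"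
    by (rule measurable_compose_countable[where f = "\<lambda>T w. card (selected_before c w T \<inter> Y)",
          OF measurable_card_selected_before_Int[OF assms] measurable_Tn])
  then have "Measurable.pred sample_space (\<lambda>w. card (Sset c w n \<inter> Y) = k)"
    unfolding Sset_eq_selected_before by measurable
  then show ?thesis unfolding Measurable.pred_def .
qed

text \<open>
  A selection pattern records, for each of the first \<open>T\<^sub>n\<close> samples, whether it was selected;
  \<open>count_true_before b t\<close> is then the phase \<open>j\<close> in which sample \<open>t\<close> is tested against \<open>\<X>\<^sub>j\<close>.
\<close>

definition count_true :: "bool list \<Rightarrow> nat" where
  "count_true b = length (filter id b)"

definition count_true_before :: "bool list \<Rightarrow> nat \<Rightarrow> nat" where
  "count_true_before b t = count_true (take t b)"

definition true_positions :: "bool list \<Rightarrow> nat set" where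
  "true_positions b = {t. t < length b \<and> b ! t}"

definition false_positions :: "bool list \<Rightarrow> nat set" where
  "false_positions b = {t. t < length b \<and> \<not> b ! t}"

lemma count_true_append [simp]: "count_true (xs @ ys) = count_true xs + count_true ys"
  by (simp add: count_true_def)

lemma count_true_take_drop: "count_true (take k b) + count_true (drop k b) = count_true b"
  by (metis append_take_drop_id count_true_append)

lemma count_true_before_Suc:
  "t < length b \<Longrightarrow> count_true_before b (Suc t) = count_true_before b t + (if b ! t then 1 else 0)"
  by (simp add: count_true_before_def take_Suc_conv_app_nth count_true_def)

lemma count_true_before_length: "count_true_before b (length b) = count_true b"
  by (simp add: count_true_before_def)

lemma count_true_before_mono: "s \<le> s' \<Longrightarrow> count_true_before b s \<le> count_true_before b s'"
  using count_true_take_drop[of s "take s' b"] by (simp add: count_true_before_def min_def)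

lemma finite_true_positions [simp]: "finite (true_positions b)"
  and finite_false_positions [simp]: "finite (false_positions b)"
  by (auto simp: true_positions_def false_positions_def)

lemma card_true_positions: "card (true_positions b) = count_true b"
  by (simp add: true_positions_def count_true_def length_filter_conv_card)

lemma lessThan_length_eq_positions:
  "{..<length b} = true_positions b \<union> false_positions b"
  "true_positions b \<inter> false_positions b = {}"
  by (auto simp: true_positions_def false_positions_def)

locale threshold_rule =
  fixes c :: "nat \<Rightarrow> real" and n :: nat
  assumes c_pos: "\<forall>i\<ge>1. 0 < c i \<and> c i \<le> 1"
    and c_antimono: "\<forall>i j. 1 \<le> i \<longrightarrow> i \<le> j \<longrightarrow> c j \<le> c i"
    and n_ge_1: "1 \<le> n"
begin

abbreviation X :: "nat \<Rightarrow> (real \<times> real) set" where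
  "X i \<equiv> thr_set c i"

lemma thr_set_subset_Xbox: "X i \<subseteq> Xbox"
  by (auto simp: thr_set_def)

lemma thr_set_antimono: "j \<le> i \<Longrightarrow> X i \<subseteq> X j"
proof (cases "j = 0")
  case False
  assume "j \<le> i"
  then have "c i \<le> c j" using False c_antimono by auto
  with False \<open>j \<le> i\<close> show ?thesis by (auto simp: thr_set_eq)
qed (use thr_set_subset_Xbox in \<open>simp add: thr_set_def\<close>)

lemma measure_thr_set_ge: "1 \<le> j \<Longrightarrow> c j \<le> measure mu (X j)"
proof -
  assume j: "1 \<le> j"
  have "{1 - c j..1} \<times> {0..1} \<subseteq> X j"
  proof
    fix x :: "real \<times> real" assume x: "x \<in> {1 - c j..1} \<times> {0..1}"
    have "(1 - fst x) * (1 - snd x) \<le> c j * 1"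
      using x c_pos j by (intro mult_mono) auto
    then show "x \<in> X j" using x j c_pos by (auto simp: thr_set_eq Xbox_def)
  qed
  then have "measure mu ({1 - c j..1} \<times> {0..1}) \<le> measure mu (X j)"
    by (intro mu.finite_measure_mono) auto
  moreover have "measure mu ({1 - c j..1} \<times> {0..1}) = c j"
    using c_pos j by (subst measure_mu_Times_Icc) auto
  ultimately show ?thesis by simp
qed

lemma measure_thr_set_pos: "0 < measure mu (X j)"
proof (cases "j = 0")
  case True
  then show ?thesis
    by (simp add: thr_set_def measure_def emeasure_mu emeasure_lborel_Xbox)
next
  case False
  then have "0 < c j" using c_pos by simp
  with False show ?thesis using measure_thr_set_ge[of j] by simp
qed

text \<open>
  If \<open>r\<close> is outside \<open>\<X>\<^sub>j\<close> then \<open>a b > c\<^sub>j \<ge> c\<^sub>n\<close> for \<open>a = 1 - r\<^sub>1\<close>, \<open>b = 1 - r\<^sub>2\<close>, so the rectangle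
  \<open>[r\<^sub>1, 1] \<times> [1 - c\<^sub>n/a, 1]\<close> lies above \<open>r\<close>, inside \<open>\<X>\<^sub>n\<close>, and has measure \<open>c\<^sub>n\<close>.
\<close>

lemma emeasure_not_above_le:
  assumes r: "r \<in> Xbox" "r \<notin> X j" and j: "1 \<le> j" "j \<le> n"
  shows "emeasure mu {y \<in> X n. \<not> prec r y} \<le> ennreal (measure mu (X n) - c n)"
proof -
  define a where "a = 1 - fst r"
  define b where "b = 1 - snd r"
  have cn: "0 < c n" "c n \<le> c j" using c_pos c_antimono j n_ge_1 by auto
  have ab: "0 \<le> a" "a \<le> 1" "0 \<le> b" "b \<le> 1" using r by (auto simp: a_def b_def Xbox_def)
  have ab_gt: "c n < a * b" using r j cn by (auto simp: thr_set_eq a_def b_def)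
  then have a_pos: "0 < a" using cn ab by (cases "a = 0") auto
  have cn_b: "c n / a < b" using ab_gt a_pos by (simp add: divide_less_eq mult.commute)
  have cn_a: "0 \<le> c n / a" using a_pos cn by simp
  define R where "R = {fst r..1} \<times> {1 - c n / a..1}"
  have R_sets: "R \<in> sets mu" by (simp add: R_def borel_Times)
  have "measure mu R = (1 - fst r) * (1 - (1 - c n / a))"
    unfolding R_def using ab cn_b cn_a by (subst measure_mu_Times_Icc) (auto simp: a_def b_def)
  then have measure_R: "measure mu R = c n" using a_pos by (simp add: a_def)
  have "R \<subseteq> X n"
  proof
    fix y assume y: "y \<in> R"
    have "(1 - fst y) * (1 - snd y) \<le> a * (c n / a)"
      using y ab cn_b cn_a unfolding R_def a_def by (intro mult_mono) auto
    moreover have "y \<in> Xbox" using y ab cn_b cn_a unfolding R_def Xbox_def a_def by auto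
    ultimately show "y \<in> X n" using n_ge_1 a_pos by (auto simp: thr_set_eq)
  qed
  have not_above_eq: "{y \<in> X n. \<not> prec r y} = X n - {fst r..} \<times> {snd r..}"
    by (auto simp: prec_def)
  have "{y \<in> X n. \<not> prec r y} \<subseteq> X n - R"
    unfolding R_def prec_def using ab cn_b cn_a by (auto simp: b_def)
  then have "measure mu {y \<in> X n. \<not> prec r y} \<le> measure mu (X n - R)"
    using R_sets by (intro mu.finite_measure_mono) auto
  also have "\<dots> = measure mu (X n) - c n"
    using \<open>R \<subseteq> X n\<close> R_sets measure_R by (subst mu.finite_measure_Diff) auto
  finally show ?thesis
    using not_above_eq by (simp add: mu.emeasure_eq_measure ennreal_leI borel_Times)
qed

section \<open>The \<open>n\<close>-th selection happens almost surely\<close>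

lemma nsel_mono: "s \<le> t \<Longrightarrow> nsel c w s \<le> nsel c w t"
  by (induction t) (auto simp: le_Suc_eq)

lemma eventually_outside_thr_set:
  assumes never: "\<forall>t. nsel c w t \<noteq> n"
  shows "\<exists>j t\<^sub>1. \<forall>t\<ge>t\<^sub>1. w t \<notin> X j"
proof -
  have "nsel c w t < n" for t
  proof (induction t)
    case (Suc t)
    then show ?case using never[rule_format, of "Suc t"] by (simp split: if_splits)
  qed (use n_ge_1 in simp)
  then have finite: "finite (range (nsel c w))"
    by (auto intro: finite_subset[of _ "{..<n}"])
  define j where "j = Max (range (nsel c w))"
  obtain t\<^sub>1 where t\<^sub>1: "nsel c w t\<^sub>1 = j"
    using Max_in[OF finite] unfolding j_def by auto
  have stable: "nsel c w t = j" if "t\<^sub>1 \<le> t" for t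
    using nsel_mono[OF that, of w] Max_ge[OF finite, of "nsel c w t"] t\<^sub>1 unfolding j_def by auto
  have "w t \<notin> X j" if "t\<^sub>1 \<le> t" for t
  proof -
    have j: "nsel c w t = j" and "nsel c w (Suc t) = nsel c w t"
      using stable[OF that] stable[OF le_SucI[OF that]] by auto
    from this(2) have "w t \<notin> X (nsel c w t)" by (simp split: if_splits)
    with j show ?thesis by simp
  qed
  then show ?thesis by blast
qed

lemma null_sets_eventually_outside_thr_set: "{w. \<forall>t\<ge>t\<^sub>1. w t \<notin> X j} \<in> null_sets sample_space"
proof -
  interpret S: prob_space sample_space by (rule prob_space_sample_space)
  let ?B = "{w. \<forall>t\<ge>t\<^sub>1. w t \<notin> X j}"
  have "?B = (\<Inter>t\<in>{t\<^sub>1..}. {w \<in> space (PiM UNIV (\<lambda>_ :: nat. mu)). w t \<in> UNIV - X j})"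
    by (auto simp: space_PiM)
  also have "\<dots> \<in> sets (PiM UNIV (\<lambda>_ :: nat. mu))"
    by (intro sets.countable_INT') (auto intro!: sets_Collect_single')
  finally have B_sets: "?B \<in> sets sample_space" unfolding sample_space_def .
  define q where "q = 1 - measure mu (X j)"
  have q: "0 \<le> q" "q < 1"
    using measure_thr_set_pos[of j] prob_space.prob_le_1[OF prob_space_mu, of "X j"]
    by (auto simp: q_def)
  have "measure sample_space ?B \<le> q ^ N" for N
  proof -
    let ?BN = "{w \<in> space sample_space. \<forall>t\<in>{t\<^sub>1..<t\<^sub>1 + N}. w t \<in> UNIV - X j}"
    have "?BN \<in> sets sample_space" unfolding sample_space_def by measurable
    then have "emeasure sample_space ?B \<le> emeasure sample_space ?BN"
      by (intro emeasure_mono) auto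
    also have "\<dots> = (\<Prod>t\<in>{t\<^sub>1..<t\<^sub>1 + N}. emeasure mu (UNIV - X j))"
      unfolding sample_space_def by (rule samples.emeasure_PiM_Collect) auto
    also have "\<dots> = ennreal (q ^ N)"
      using mu.prob_compl[of "X j"]
      by (simp add: mu.emeasure_eq_measure q_def prod_ennreal[symmetric] ennreal_power)
    finally show ?thesis using q by (simp add: S.emeasure_eq_measure)
  qed
  moreover have "(\<lambda>N. q ^ N) \<longlonglongrightarrow> 0" using q by (intro LIMSEQ_power_zero) auto
  ultimately have "measure sample_space ?B \<le> 0"
    by (intro LIMSEQ_le_const) auto
  then show ?thesis using B_sets by (auto simp: S.emeasure_eq_measure measure_le_0_iff)
qed

lemma AE_nsel_reaches: "AE w in sample_space. \<exists>t. nsel c w t = n"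
proof (rule AE_I')
  show "(\<Union>j. \<Union>t\<^sub>1. {w. \<forall>t\<ge>t\<^sub>1. w t \<notin> X j}) \<in> null_sets sample_space"
    by (intro null_sets_UN null_sets_eventually_outside_thr_set)
next
  show "{w \<in> space sample_space. \<not> (\<exists>t. nsel c w t = n)} \<subseteq> (\<Union>j. \<Union>t\<^sub>1. {w. \<forall>t\<ge>t\<^sub>1. w t \<notin> X j})"
  proof
    fix w assume "w \<in> {w \<in> space sample_space. \<not> (\<exists>t. nsel c w t = n)}"
    then have "\<forall>t. nsel c w t \<noteq> n" by auto
    from eventually_outside_thr_set[OF this] obtain j t\<^sub>1 where "\<forall>t\<ge>t\<^sub>1. w t \<notin> X j"
      by blast
    then show "w \<in> (\<Union>j. \<Union>t\<^sub>1. {w. \<forall>t\<ge>t\<^sub>1. w t \<notin> X j})" by blast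
  qed
qed

definition pattern_set :: "bool list \<Rightarrow> nat \<Rightarrow> (real \<times> real) set" where
  "pattern_set b t = (if b ! t then X (count_true_before b t) else UNIV - X (count_true_before b t))"

definition pattern_event :: "bool list \<Rightarrow> (nat \<Rightarrow> real \<times> real) set" where
  "pattern_event b = {w. \<forall>t<length b. w t \<in> pattern_set b t}"

definition complete_pattern :: "bool list \<Rightarrow> bool" where
  "complete_pattern b \<longleftrightarrow> count_true b = n \<and> b \<noteq> [] \<and> last b"

lemma sets_pattern_set [measurable]: "pattern_set b t \<in> sets borel"
  by (simp add: pattern_set_def)

lemma nsel_pattern_event:
  "w \<in> pattern_event b \<Longrightarrow> t \<le> length b \<Longrightarrow> nsel c w t = count_true_before b t"
proof (induction t)
  case 0
  then show ?case by (simp add: count_true_before_def count_true_def)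
next
  case (Suc t)
  then have t: "t < length b" by simp
  have "w t \<in> pattern_set b t" using Suc.prems t by (auto simp: pattern_event_def)
  then have "(w t \<in> X (count_true_before b t)) = b ! t"
    by (auto simp: pattern_set_def split: if_splits)
  then show ?case using Suc count_true_before_Suc[OF t] by simp
qed

lemma count_true_before_less:
  assumes "complete_pattern b" "t < length b"
  shows "count_true_before b t < n"
proof -
  have "drop t b \<noteq> []" and "last (drop t b) = last b"
    using assms by simp_all
  then have "True \<in> set (drop t b)"
    using assms(1) unfolding complete_pattern_def by (metis last_in_set)
  then have "True \<in> set (filter id (drop t b))" by simp
  then have "1 \<le> count_true (drop t b)" unfolding count_true_def
    by (metis One_nat_def Suc_leI length_pos_if_in_set)
  then show ?thesis using count_true_take_drop[of t b] assms(1)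
    unfolding count_true_before_def complete_pattern_def by linarith
qed

lemma Tn_pattern_event:
  assumes b: "complete_pattern b" and w: "w \<in> pattern_event b"
  shows "Tn c w n = length b"
  unfolding Tn_def
proof (rule Least_equality)
  show "nsel c w (length b) = n"
    using nsel_pattern_event[OF w] b count_true_before_length by (simp add: complete_pattern_def)
next
  fix t assume "nsel c w t = n"
  show "length b \<le> t"
  proof (rule ccontr)
    assume "\<not> length b \<le> t"
    then have "count_true_before b t < n" and "nsel c w t = count_true_before b t"
      using count_true_before_less[OF b] nsel_pattern_event[OF w] by auto
    with \<open>nsel c w t = n\<close> show False by simp
  qed
qed

lemma selected_pattern_event: "w \<in> pattern_event b \<Longrightarrow> t < length b \<Longrightarrow> selected c w t = b ! t"
  using nsel_pattern_event[of w b t]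
  by (auto simp: selected_def pattern_event_def pattern_set_def split: if_splits)

lemma Sset_pattern_event:
  assumes "complete_pattern b" "w \<in> pattern_event b"
  shows "Sset c w n = w ` true_positions b"
  using selected_pattern_event[OF assms(2)] Tn_pattern_event[OF assms]
  by (auto simp: Sset_def true_positions_def)

lemma Rset_pattern_event:
  assumes "complete_pattern b" "w \<in> pattern_event b" "inj w"
  shows "Rset c w n = w ` false_positions b"
proof -
  have "Rset c w n = w ` {..<length b} - w ` true_positions b"
    using Sset_pattern_event[OF assms(1,2)] Tn_pattern_event[OF assms(1,2)] by (simp add: Rset_def)
  also have "\<dots> = w ` ({..<length b} - true_positions b)"
    using assms(3) by (simp add: image_set_diff)
  also have "{..<length b} - true_positions b = false_positions b"
    by (auto simp: true_positions_def false_positions_def)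
  finally show ?thesis .
qed

lemma pattern_event_exists:
  assumes "nsel c w t\<^sub>0 = n"
  shows "\<exists>b. complete_pattern b \<and> w \<in> pattern_event b"
proof -
  define T where "T = Tn c w n"
  have nsel_T: "nsel c w T = n" unfolding T_def Tn_def by (rule LeastI[of _ t\<^sub>0]) (rule assms)
  have before_T: "t < T \<Longrightarrow> nsel c w t \<noteq> n" for t unfolding T_def Tn_def by (rule not_less_Least)
  have T_pos: "T \<noteq> 0" using nsel_T n_ge_1 by (cases T) auto
  define b where "b = map (\<lambda>t. selected c w t) [0..<T]"
  have length_b: "length b = T" by (simp add: b_def)
  have nth_b: "t < T \<Longrightarrow> b ! t = selected c w t" for t by (simp add: b_def)
  have nsel_b: "t \<le> T \<Longrightarrow> nsel c w t = count_true_before b t" for t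
  proof (induction t)
    case 0
    then show ?case by (simp add: count_true_before_def count_true_def)
  next
    case (Suc t)
    then show ?case using count_true_before_Suc[of t b] nth_b[of t] length_b by (simp add: selected_def)
  qed
  have "w \<in> pattern_event b"
    unfolding pattern_event_def pattern_set_def using nsel_b nth_b length_b by (auto simp: selected_def)
  moreover have "count_true b = n"
    using nsel_b[of T] nsel_T length_b count_true_before_length[of b] by simp
  moreover have "last b"
  proof -
    have "last b = selected c w (T - 1)"
      using T_pos length_b nth_b by (metis diff_less last_conv_nth length_0_conv less_one not_gr_zero)
    moreover have "nsel c w T = nsel c w (T - 1) + (if selected c w (T - 1) then 1 else 0)"
      using T_pos by (cases T) (auto simp: selected_def)
    ultimately show ?thesis using nsel_T before_T[of "T - 1"] T_pos by (auto split: if_splits)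
  qed
  ultimately show ?thesis using T_pos length_b by (auto simp: complete_pattern_def)
qed

lemma complete_pattern_unique:
  assumes "complete_pattern b" "complete_pattern b'" "w \<in> pattern_event b" "w \<in> pattern_event b'"
  shows "b = b'"
proof (rule nth_equalityI)
  show length: "length b = length b'" using Tn_pattern_event assms by metis
  fix i assume "i < length b"
  then show "b ! i = b' ! i"
    using selected_pattern_event[OF assms(3)] selected_pattern_event[OF assms(4)] length by metis
qed

lemma bij_betw_count_true_before:
  assumes b: "complete_pattern b"
  shows "bij_betw (count_true_before b) (true_positions b) {..<n}"
proof -
  have inj: "inj_on (count_true_before b) (true_positions b)"
  proof (rule linorder_inj_onI)
    fix s s' assume "s < s'" "s \<in> true_positions b" "s' \<in> true_positions b"
    then have "count_true_before b (Suc s) \<le> count_true_before b s'"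
      and "count_true_before b (Suc s) = count_true_before b s + 1"
      using count_true_before_Suc[of s b] count_true_before_mono[of "Suc s" s' b]
      by (auto simp: true_positions_def)
    then show "count_true_before b s \<noteq> count_true_before b s'" by simp
  qed auto
  have subset: "count_true_before b ` true_positions b \<subseteq> {..<n}"
    using count_true_before_less[OF b] by (auto simp: true_positions_def)
  have "card (count_true_before b ` true_positions b) = card {..<n}"
    using card_image[OF inj] card_true_positions b by (simp add: complete_pattern_def)
  then have "count_true_before b ` true_positions b = {..<n}"
    using subset by (intro card_subset_eq) auto
  then show ?thesis using inj by (simp add: bij_betw_def)
qed

definition z_count :: "bool list \<Rightarrow> (nat \<Rightarrow> real \<times> real) \<Rightarrow> nat" where
  "z_count b w = card {s \<in> true_positions b. w s \<in> X n}"

text \<open>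
  Splitting \<open>{z = k}\<close> according to which selected samples land in \<open>\<X>\<^sub>n\<close> turns it into a
  disjoint union of product events.
\<close>

definition z_pattern_set :: "bool list \<Rightarrow> nat set \<Rightarrow> nat \<Rightarrow> (real \<times> real) set" where
  "z_pattern_set b A t =
    (if t \<in> A then X n
     else if t \<in> true_positions b then X (count_true_before b t) - X n
     else pattern_set b t)"

definition z_subsets :: "bool list \<Rightarrow> nat \<Rightarrow> nat set set" where
  "z_subsets b k = {A. A \<subseteq> true_positions b \<and> card A = k}"

lemma sets_z_pattern_set [measurable]: "z_pattern_set b A t \<in> sets borel"
  by (simp add: z_pattern_set_def)

lemma finite_z_subsets [simp]: "finite (z_subsets b k)"
  by (rule finite_subset[of _ "Pow (true_positions b)"]) (auto simp: z_subsets_def)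

lemma thr_set_n_subset_phase:
  "complete_pattern b \<Longrightarrow> s \<in> true_positions b \<Longrightarrow> X n \<subseteq> X (count_true_before b s)"
  using count_true_before_less[of b s] by (intro thr_set_antimono) (auto simp: true_positions_def)

lemma in_z_pattern_set_iff:
  assumes b: "complete_pattern b" and A: "A \<subseteq> true_positions b"
  shows "(\<forall>t<length b. w t \<in> z_pattern_set b A t)
    \<longleftrightarrow> w \<in> pattern_event b \<and> A = {s \<in> true_positions b. w s \<in> X n}"
proof
  assume H: "\<forall>t<length b. w t \<in> z_pattern_set b A t"
  have "w t \<in> pattern_set b t" if t: "t < length b" for t
  proof (cases "t \<in> true_positions b")
    case True
    then show ?thesis using H t thr_set_n_subset_phase[OF b True]
      by (auto simp: z_pattern_set_def pattern_set_def true_positions_def split: if_splits)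
  next
    case False
    then have "t \<notin> A" using A by auto
    with False show ?thesis using H[rule_format, OF t] by (simp add: z_pattern_set_def)
  qed
  moreover have "A = {s \<in> true_positions b. w s \<in> X n}"
  proof (intro equalityI subsetI)
    fix s assume s: "s \<in> A"
    then have "s \<in> true_positions b" "s < length b" using A by (auto simp: true_positions_def)
    then show "s \<in> {s \<in> true_positions b. w s \<in> X n}"
      using H s by (auto simp: z_pattern_set_def)
  next
    fix s assume s: "s \<in> {s \<in> true_positions b. w s \<in> X n}"
    then have "w s \<in> z_pattern_set b A s" using H by (simp add: true_positions_def)
    then show "s \<in> A" using s by (auto simp: z_pattern_set_def split: if_splits)
  qed
  ultimately show "w \<in> pattern_event b \<and> A = {s \<in> true_positions b. w s \<in> X n}"
    by (simp add: pattern_event_def)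
next
  assume "w \<in> pattern_event b \<and> A = {s \<in> true_positions b. w s \<in> X n}"
  then show "\<forall>t<length b. w t \<in> z_pattern_set b A t"
    by (auto simp: pattern_event_def z_pattern_set_def pattern_set_def true_positions_def)
qed

lemma indicator_pattern_event_z_count:
  assumes b: "complete_pattern b"
  shows "indicator (pattern_event b) w * indicator {w. z_count b w = k} w
       = (\<Sum>A\<in>z_subsets b k. \<Prod>t<length b. indicator (z_pattern_set b A t) (w t) :: ennreal)"
proof -
  define A\<^sub>0 where "A\<^sub>0 = {s \<in> true_positions b. w s \<in> X n}"
  have "(\<Sum>A\<in>z_subsets b k. \<Prod>t<length b. indicator (z_pattern_set b A t) (w t) :: ennreal)
      = (\<Sum>A\<in>z_subsets b k. if A = A\<^sub>0 \<and> w \<in> pattern_event b then 1 else 0)"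
    by (intro sum.cong refl)
       (auto simp: prod_indicator_lessThan in_z_pattern_set_iff[OF b] z_subsets_def A\<^sub>0_def)
  also have "\<dots> = (if w \<in> pattern_event b \<and> A\<^sub>0 \<in> z_subsets b k then 1 else 0)"
    by (cases "w \<in> pattern_event b") (auto simp: sum.delta')
  finally show ?thesis
    by (auto simp: z_subsets_def A\<^sub>0_def z_count_def indicator_def)
qed

lemma borel_measurable_pattern_event [measurable]:
  "(\<lambda>w. indicator (pattern_event b) w :: ennreal) \<in> borel_measurable sample_space"
proof -
  have "indicator (pattern_event b) w = (\<Prod>t<length b. indicator (pattern_set b t) (w t) :: ennreal)" for w
    by (auto simp: prod_indicator_lessThan pattern_event_def indicator_def)
  then show ?thesis by (simp add: borel_measurable_prod_indicator)
qed

lemma borel_measurable_pattern_event_z_count: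
  assumes "complete_pattern b"
  shows "(\<lambda>w. indicator (pattern_event b) w * indicator {w. z_count b w = k} w :: ennreal)
      \<in> borel_measurable sample_space"
  unfolding indicator_pattern_event_z_count[OF assms]
  by (intro borel_measurable_sum borel_measurable_prod_indicator) simp

lemma nn_integral_pattern_event_eq_prod:
  "(\<integral>\<^sup>+w. indicator (pattern_event b) w \<partial>sample_space) = (\<Prod>t<length b. emeasure mu (pattern_set b t))"
proof -
  have "(\<integral>\<^sup>+w. indicator (pattern_event b) w \<partial>sample_space)
      = (\<integral>\<^sup>+w. (\<Prod>t<length b. indicator (pattern_set b t) (w t)) \<partial>sample_space)"
    by (intro nn_integral_cong) (auto simp: prod_indicator_lessThan pattern_event_def indicator_def)
  then show ?thesis by (simp add: nn_integral_sample_space_prod_indicator)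
qed

lemma nn_integral_pattern_event_z_count_eq_sum:
  assumes "complete_pattern b"
  shows "(\<integral>\<^sup>+w. indicator (pattern_event b) w * indicator {w. z_count b w = k} w \<partial>sample_space)
       = (\<Sum>A\<in>z_subsets b k. \<Prod>t<length b. emeasure mu (z_pattern_set b A t))"
  unfolding indicator_pattern_event_z_count[OF assms]
  by (subst nn_integral_sum) (auto intro: borel_measurable_prod_indicator
      simp: nn_integral_sample_space_prod_indicator)

section \<open>Rejected samples missed by every selected sample in \<open>\<X>\<^sub>n\<close>\<close>

definition undominated :: "bool list \<Rightarrow> nat \<Rightarrow> (nat \<Rightarrow> real \<times> real) \<Rightarrow> bool" where
  "undominated b t\<^sub>0 w \<longleftrightarrow> (\<forall>s\<in>true_positions b. w s \<in> X n \<longrightarrow> \<not> prec (w t\<^sub>0) (w s))"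

definition undominated_set :: "bool list \<Rightarrow> nat set \<Rightarrow> real \<times> real \<Rightarrow> nat \<Rightarrow> (real \<times> real) set" where
  "undominated_set b A r t = (if t \<in> A then {y \<in> X n. \<not> prec r y} else z_pattern_set b A t)"

lemma sets_undominated_set [measurable]: "undominated_set b A r t \<in> sets borel"
proof -
  have "{y \<in> X n. \<not> prec r y} = X n - {fst r..} \<times> {snd r..}"
    by (auto simp: prec_def)
  moreover have "{fst r..} \<times> {snd r..} \<in> sets borel" by (simp add: borel_Times)
  ultimately show ?thesis by (simp add: undominated_set_def sets.Diff)
qed

lemma indicator_undominated:
  assumes b: "complete_pattern b" and t\<^sub>0: "t\<^sub>0 \<in> false_positions b"
  shows "indicator (pattern_event b) w * indicator {w. z_count b w = k \<and> undominated b t\<^sub>0 w} w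
       = (\<Sum>A\<in>z_subsets b k. \<Prod>t<length b. indicator (undominated_set b A (w t\<^sub>0) t) (w t) :: ennreal)"
proof -
  define A\<^sub>0 where "A\<^sub>0 = {s \<in> true_positions b. w s \<in> X n}"
  have iff: "(\<forall>t<length b. w t \<in> undominated_set b A (w t\<^sub>0) t)
      \<longleftrightarrow> w \<in> pattern_event b \<and> A = A\<^sub>0 \<and> undominated b t\<^sub>0 w"
    if A: "A \<subseteq> true_positions b" for A
  proof -
    have "A \<subseteq> {..<length b}" using A by (auto simp: true_positions_def)
    then have "(\<forall>t<length b. w t \<in> undominated_set b A (w t\<^sub>0) t)
        \<longleftrightarrow> (\<forall>t<length b. w t \<in> z_pattern_set b A t) \<and> (\<forall>s\<in>A. \<not> prec (w t\<^sub>0) (w s))"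
      by (auto simp: undominated_set_def z_pattern_set_def)
    then show ?thesis
      using in_z_pattern_set_iff[OF b A] by (auto simp: A\<^sub>0_def undominated_def)
  qed
  have "(\<Sum>A\<in>z_subsets b k. \<Prod>t<length b. indicator (undominated_set b A (w t\<^sub>0) t) (w t) :: ennreal)
      = (\<Sum>A\<in>z_subsets b k. if A = A\<^sub>0 \<and> w \<in> pattern_event b \<and> undominated b t\<^sub>0 w then 1 else 0)"
    by (intro sum.cong refl) (auto simp: prod_indicator_lessThan iff z_subsets_def)
  also have "\<dots> = (if w \<in> pattern_event b \<and> undominated b t\<^sub>0 w \<and> A\<^sub>0 \<in> z_subsets b k then 1 else 0)"
    by (cases "w \<in> pattern_event b \<and> undominated b t\<^sub>0 w") (auto simp: sum.delta')
  finally show ?thesis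
    by (auto simp: z_subsets_def A\<^sub>0_def z_count_def indicator_def)
qed

lemma borel_measurable_prod_undominated_set:
  fixes L :: nat
  assumes "{..<L} \<subseteq> I" "t\<^sub>0 \<in> I"
  shows "(\<lambda>w. \<Prod>t<L. indicator (undominated_set b A (w t\<^sub>0) t) (w t) :: ennreal)
    \<in> borel_measurable (PiM I (\<lambda>_. mu))"
proof (intro borel_measurable_prod_ennreal)
  let ?M = "PiM I (\<lambda>_. mu)"
  fix t assume "t \<in> {..<L}"
  then have t: "t \<in> I" using assms by auto
  show "(\<lambda>w. indicator (undominated_set b A (w t\<^sub>0) t) (w t) :: ennreal) \<in> borel_measurable ?M"
  proof (cases "t \<in> A")
    case True
    have "{w \<in> space ?M. fst (w t\<^sub>0) \<le> fst (w t)} \<in> sets ?M"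
      "{w \<in> space ?M. snd (w t\<^sub>0) \<le> snd (w t)} \<in> sets ?M"
      by (rule borel_measurable_le[OF borel_measurable_fst_component[OF assms(2)]
            borel_measurable_fst_component[OF t]],
          rule borel_measurable_le[OF borel_measurable_snd_component[OF assms(2)]
            borel_measurable_snd_component[OF t]])
    moreover have "{w \<in> space ?M. w t \<in> X n} \<in> sets ?M" using t by measurable
    ultimately have "{w \<in> space ?M. w t \<in> X n} - ({w \<in> space ?M. fst (w t\<^sub>0) \<le> fst (w t)}
        \<inter> {w \<in> space ?M. snd (w t\<^sub>0) \<le> snd (w t)}) \<in> sets ?M"
      by auto
    moreover have "{w \<in> space ?M. w t \<in> X n} - ({w \<in> space ?M. fst (w t\<^sub>0) \<le> fst (w t)}
        \<inter> {w \<in> space ?M. snd (w t\<^sub>0) \<le> snd (w t)})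
      = {w \<in> space ?M. w t \<in> undominated_set b A (w t\<^sub>0) t}"
      using True by (auto simp: undominated_set_def prec_def)
    ultimately show ?thesis
      by (simp add: borel_measurable_indicator_iff indicator_def[abs_def] of_bool_def)
  next
    case False
    then show ?thesis using t by (simp add: undominated_set_def)
  qed
qed

lemma borel_measurable_undominated:
  assumes "complete_pattern b" "t\<^sub>0 \<in> false_positions b"
  shows "(\<lambda>w. indicator (pattern_event b) w * indicator {w. z_count b w = k \<and> undominated b t\<^sub>0 w} w
    :: ennreal) \<in> borel_measurable sample_space"
  unfolding indicator_undominated[OF assms] sample_space_def
  by (intro borel_measurable_sum borel_measurable_prod_undominated_set) auto

lemma emeasure_undominated_set_le:
  assumes b: "complete_pattern b" and t\<^sub>0: "t\<^sub>0 \<in> false_positions b"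
    and y: "y \<in> Xbox" "y \<in> pattern_set b t\<^sub>0"
  shows "emeasure mu (undominated_set b A y t)
    \<le> (if t \<in> A then ennreal (measure mu (X n) - c n) else emeasure mu (z_pattern_set b A t))"
proof (cases "t \<in> A")
  case True
  have y_notin: "y \<notin> X (count_true_before b t\<^sub>0)"
    using y t\<^sub>0 by (simp add: pattern_set_def false_positions_def)
  then have "count_true_before b t\<^sub>0 \<noteq> 0" using y(1) by (auto simp: thr_set_def split: if_splits)
  moreover have "count_true_before b t\<^sub>0 < n"
    using count_true_before_less[OF b] t\<^sub>0 by (simp add: false_positions_def)
  ultimately show ?thesis
    using True emeasure_not_above_le[OF y(1) y_notin] by (simp add: undominated_set_def)
qed (simp add: undominated_set_def)

lemma prod_undominated_bound_eq:
  assumes "finite I" "A \<subseteq> I" "card A = k"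
  shows "(\<Prod>t\<in>I. if t \<in> A then ennreal (measure mu (X n) - c n) else emeasure mu (z_pattern_set b A t))
    = ennreal (1 - c n / measure mu (X n)) ^ k * (\<Prod>t\<in>I. emeasure mu (z_pattern_set b A t))"
proof -
  define m where "m = measure mu (X n)"
  define q where "q = 1 - c n / m"
  have m_pos: "0 < m" and cn_le_m: "c n \<le> m"
    using measure_thr_set_pos measure_thr_set_ge n_ge_1 by (auto simp: m_def)
  have "m - c n = q * m" using m_pos by (simp add: q_def left_diff_distrib)
  moreover have "0 \<le> q" using m_pos cn_le_m by (simp add: q_def)
  ultimately have "ennreal (m - c n) = ennreal q * emeasure mu (X n)"
    using m_pos by (simp add: ennreal_mult mu.emeasure_eq_measure m_def)
  then have "(if t \<in> A then ennreal (m - c n) else emeasure mu (z_pattern_set b A t))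
      = (if t \<in> A then ennreal q else 1) * emeasure mu (z_pattern_set b A t)" for t
    by (simp add: z_pattern_set_def)
  then have "(\<Prod>t\<in>I. if t \<in> A then ennreal (m - c n) else emeasure mu (z_pattern_set b A t))
      = (\<Prod>t\<in>I. (if t \<in> A then ennreal q else 1) * emeasure mu (z_pattern_set b A t))"
    by (rule prod.cong[OF refl])
  also have "\<dots> = (\<Prod>t\<in>I. if t \<in> A then ennreal q else 1) * (\<Prod>t\<in>I. emeasure mu (z_pattern_set b A t))"
    by (rule prod.distrib)
  also have "(\<Prod>t\<in>I. if t \<in> A then ennreal q else 1) = ennreal q ^ k"
    using prod.inter_restrict[of I "\<lambda>_. ennreal q" A] assms
    by (simp add: Int_absorb1 del: prod.inter_restrict)
  finally show ?thesis by (simp only: m_def q_def)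
qed

lemma nn_integral_prod_undominated_set_le:
  assumes b: "complete_pattern b" and t\<^sub>0: "t\<^sub>0 \<in> false_positions b" and A: "A \<in> z_subsets b k"
  shows "(\<integral>\<^sup>+w. (\<Prod>t<length b. indicator (undominated_set b A (w t\<^sub>0) t) (w t)) \<partial>sample_space)
    \<le> ennreal (1 - c n / measure mu (X n)) ^ k * (\<Prod>t<length b. emeasure mu (z_pattern_set b A t))"
proof -
  define I where "I = {..<length b} - {t\<^sub>0}"
  define K where "K = (\<Prod>t\<in>I. if t \<in> A then ennreal (measure mu (X n) - c n)
    else emeasure mu (z_pattern_set b A t))"
  have t\<^sub>0_less: "t\<^sub>0 < length b" and t\<^sub>0_notin: "t\<^sub>0 \<notin> true_positions b" "t\<^sub>0 \<notin> A"
    using t\<^sub>0 A by (auto simp: false_positions_def true_positions_def z_subsets_def)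
  have A_I: "A \<subseteq> I" and card_A: "card A = k" and finite_I: "finite I"
    using A t\<^sub>0_notin by (auto simp: z_subsets_def I_def true_positions_def)
  have t\<^sub>0_set: "undominated_set b A y t\<^sub>0 = pattern_set b t\<^sub>0"
    "z_pattern_set b A t\<^sub>0 = pattern_set b t\<^sub>0" for y
    using t\<^sub>0_notin by (simp_all add: undominated_set_def z_pattern_set_def)
  have K_eq: "K = ennreal (1 - c n / measure mu (X n)) ^ k * (\<Prod>t\<in>I. emeasure mu (z_pattern_set b A t))"
    unfolding K_def by (rule prod_undominated_bound_eq[OF finite_I A_I card_A])
  have "(\<integral>\<^sup>+w. (\<Prod>t<length b. indicator (undominated_set b A (w t\<^sub>0) t) (w t)) \<partial>sample_space)
      = (\<integral>\<^sup>+y. indicator (pattern_set b t\<^sub>0) y * (\<Prod>t\<in>I. emeasure mu (undominated_set b A y t)) \<partial>mu)"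
    unfolding I_def using t\<^sub>0_less
    by (subst nn_integral_sample_space_prod_indicator_dependent)
       (auto intro: borel_measurable_prod_undominated_set simp: t\<^sub>0_set)
  also have "\<dots> \<le> (\<integral>\<^sup>+y. indicator (pattern_set b t\<^sub>0) y * K \<partial>mu)"
  proof (rule nn_integral_mono_AE, rule AE_mp[OF AE_mu_Xbox], intro AE_I2 impI)
    fix y assume "y \<in> Xbox"
    then have "y \<in> pattern_set b t\<^sub>0 \<Longrightarrow> (\<Prod>t\<in>I. emeasure mu (undominated_set b A y t)) \<le> K"
      unfolding K_def by (intro prod_mono_ennreal emeasure_undominated_set_le[OF b t\<^sub>0])
    then show "indicator (pattern_set b t\<^sub>0) y * (\<Prod>t\<in>I. emeasure mu (undominated_set b A y t))
        \<le> indicator (pattern_set b t\<^sub>0) y * K"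
      by (cases "y \<in> pattern_set b t\<^sub>0") (auto intro: mult_left_mono)
  qed
  also have "\<dots> = emeasure mu (pattern_set b t\<^sub>0) * K"
    by (subst nn_integral_multc) auto
  also have "\<dots> = ennreal (1 - c n / measure mu (X n)) ^ k
      * (\<Prod>t<length b. emeasure mu (z_pattern_set b A t))"
    using t\<^sub>0_less unfolding K_eq I_def
    by (subst (2) prod.remove[of _ t\<^sub>0]) (auto simp: t\<^sub>0_set ac_simps)
  finally show ?thesis .
qed

lemma nn_integral_undominated_le:
  assumes b: "complete_pattern b" and t\<^sub>0: "t\<^sub>0 \<in> false_positions b"
  shows "(\<integral>\<^sup>+w. indicator (pattern_event b) w * indicator {w. z_count b w = k \<and> undominated b t\<^sub>0 w} w
      \<partial>sample_space)
    \<le> ennreal (1 - c n / measure mu (X n)) ^ k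
      * (\<integral>\<^sup>+w. indicator (pattern_event b) w * indicator {w. z_count b w = k} w \<partial>sample_space)"
proof -
  have "(\<integral>\<^sup>+w. indicator (pattern_event b) w * indicator {w. z_count b w = k \<and> undominated b t\<^sub>0 w} w
      \<partial>sample_space)
      = (\<Sum>A\<in>z_subsets b k.
          \<integral>\<^sup>+w. (\<Prod>t<length b. indicator (undominated_set b A (w t\<^sub>0) t) (w t)) \<partial>sample_space)"
    unfolding indicator_undominated[OF b t\<^sub>0] sample_space_def
    by (intro nn_integral_sum borel_measurable_prod_undominated_set) auto
  also have "\<dots> \<le> (\<Sum>A\<in>z_subsets b k.
      ennreal (1 - c n / measure mu (X n)) ^ k * (\<Prod>t<length b. emeasure mu (z_pattern_set b A t)))"
    by (intro sum_mono nn_integral_prod_undominated_set_le[OF b t\<^sub>0])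
  finally show ?thesis
    by (simp add: nn_integral_pattern_event_z_count_eq_sum[OF b] sum_distrib_left)
qed

section \<open>Product form of the pattern probabilities\<close>

definition rejection_prob :: "bool list \<Rightarrow> ennreal" where
  "rejection_prob b = (\<Prod>t\<in>false_positions b. emeasure mu (pattern_set b t))"

definition phase_prob :: ennreal where
  "phase_prob = (\<Prod>j<n. emeasure mu (X j))"

definition z_phase_prob :: "nat \<Rightarrow> ennreal" where
  "z_phase_prob k =
    (\<Sum>B\<in>{B. B \<subseteq> {..<n} \<and> card B = k}. \<Prod>j<n. emeasure mu (if j \<in> B then X n else X j - X n))"

lemma prod_lessThan_length_split:
  "(\<Prod>t<length b. f t) = (\<Prod>t\<in>true_positions b. f t) * (\<Prod>t\<in>false_positions b. f t)"
  unfolding lessThan_length_eq_positions(1)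
  by (rule prod.union_disjoint) (auto simp: lessThan_length_eq_positions(2))

lemma nn_integral_pattern_event:
  assumes b: "complete_pattern b"
  shows "(\<integral>\<^sup>+w. indicator (pattern_event b) w \<partial>sample_space) = rejection_prob b * phase_prob"
proof -
  have "(\<Prod>t\<in>true_positions b. emeasure mu (pattern_set b t))
      = (\<Prod>t\<in>true_positions b. emeasure mu (X (count_true_before b t)))"
    by (intro prod.cong) (auto simp: pattern_set_def true_positions_def)
  also have "\<dots> = phase_prob"
    unfolding phase_prob_def by (rule prod.reindex_bij_betw[OF bij_betw_count_true_before[OF b]])
  finally show ?thesis
    by (simp add: nn_integral_pattern_event_eq_prod prod_lessThan_length_split rejection_prob_def ac_simps)
qed

lemma bij_betw_image_z_subsets:
  assumes b: "complete_pattern b"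
  shows "bij_betw (image (count_true_before b)) (z_subsets b k) {B. B \<subseteq> {..<n} \<and> card B = k}"
proof (rule bij_betw_subset[OF bij_betw_Pow[OF bij_betw_count_true_before[OF b]]])
  let ?phase = "count_true_before b"
  have inj: "inj_on ?phase (true_positions b)"
    using bij_betw_count_true_before[OF b] by (simp add: bij_betw_def)
  show "z_subsets b k \<subseteq> Pow (true_positions b)" by (auto simp: z_subsets_def)
  have card_eq: "card (?phase ` A) = card A" if "A \<subseteq> true_positions b" for A
    using that inj by (simp add: card_image inj_on_subset)
  have Pow_eq: "image ?phase ` Pow (true_positions b) = Pow {..<n}"
    using bij_betw_Pow[OF bij_betw_count_true_before[OF b]] by (simp add: bij_betw_def)
  show "image ?phase ` z_subsets b k = {B. B \<subseteq> {..<n} \<and> card B = k}"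
  proof (intro equalityI subsetI)
    fix B assume "B \<in> image ?phase ` z_subsets b k"
    then show "B \<in> {B. B \<subseteq> {..<n} \<and> card B = k}"
      using Pow_eq card_eq by (auto simp: z_subsets_def)
  next
    fix B assume B: "B \<in> {B. B \<subseteq> {..<n} \<and> card B = k}"
    then obtain A where "A \<subseteq> true_positions b" "B = ?phase ` A"
      using Pow_eq by (metis (no_types, lifting) PowD PowI imageE mem_Collect_eq)
    then show "B \<in> image ?phase ` z_subsets b k"
      using B card_eq by (auto simp: z_subsets_def)
  qed
qed

lemma prod_z_pattern_set_eq:
  assumes b: "complete_pattern b" and A: "A \<subseteq> true_positions b"
  shows "(\<Prod>t<length b. emeasure mu (z_pattern_set b A t)) = rejection_prob b
    * (\<Prod>j<n. emeasure mu (if j \<in> count_true_before b ` A then X n else X j - X n))"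
proof -
  let ?phase = "count_true_before b"
  let ?g = "\<lambda>j. emeasure mu (if j \<in> ?phase ` A then X n else X j - X n)"
  have bij: "bij_betw ?phase (true_positions b) {..<n}"
    by (rule bij_betw_count_true_before[OF b])
  then have inj: "inj_on ?phase (true_positions b)" by (simp add: bij_betw_def)
  have "(\<Prod>t\<in>false_positions b. emeasure mu (z_pattern_set b A t)) = rejection_prob b"
    unfolding rejection_prob_def using A
    by (intro prod.cong) (auto simp: z_pattern_set_def true_positions_def false_positions_def)
  moreover have "(\<Prod>t\<in>true_positions b. emeasure mu (z_pattern_set b A t))
      = (\<Prod>t\<in>true_positions b. ?g (?phase t))"
  proof (intro prod.cong refl)
    fix t assume t: "t \<in> true_positions b"
    then have "?phase t \<in> ?phase ` A \<longleftrightarrow> t \<in> A" using inj A by (auto dest: inj_onD)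
    then show "emeasure mu (z_pattern_set b A t) = ?g (?phase t)"
      using t by (simp add: z_pattern_set_def)
  qed
  moreover have "(\<Prod>t\<in>true_positions b. ?g (?phase t)) = (\<Prod>j<n. ?g j)"
    by (rule prod.reindex_bij_betw[OF bij])
  ultimately show ?thesis by (simp add: prod_lessThan_length_split ac_simps)
qed

lemma nn_integral_pattern_event_z_count:
  assumes b: "complete_pattern b"
  shows "(\<integral>\<^sup>+w. indicator (pattern_event b) w * indicator {w. z_count b w = k} w \<partial>sample_space)
       = rejection_prob b * z_phase_prob k"
proof -
  have "(\<Sum>A\<in>z_subsets b k.
      \<Prod>j<n. emeasure mu (if j \<in> count_true_before b ` A then X n else X j - X n)) = z_phase_prob k"
    unfolding z_phase_prob_def by (rule sum.reindex_bij_betw[OF bij_betw_image_z_subsets[OF b]])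
  then show ?thesis
    by (simp add: nn_integral_pattern_event_z_count_eq_sum[OF b] prod_z_pattern_set_eq[OF b]
        z_subsets_def sum_distrib_left[symmetric])
qed

definition typical :: "(nat \<Rightarrow> real \<times> real) \<Rightarrow> bool" where
  "typical w \<longleftrightarrow> inj w \<and> (\<forall>t. w t \<in> Xbox) \<and> (\<exists>t. nsel c w t = n)"

lemma AE_typical: "AE w in sample_space. typical w"
  using AE_sample_space_inj AE_sample_space_Xbox AE_nsel_reaches
  unfolding typical_def by (simp add: AE_conj_iff)

text \<open>A typical sample sequence follows exactly one complete pattern.\<close>

lemma typical_pattern:
  assumes "typical w"
  obtains b\<^sub>0 where "complete_pattern b\<^sub>0" "w \<in> pattern_event b\<^sub>0"
    and "\<And>f. (\<integral>\<^sup>+b. (if complete_pattern b then indicator (pattern_event b) w * f b else 0)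
        \<partial>count_space UNIV) = f b\<^sub>0"
proof -
  obtain b\<^sub>0 where b\<^sub>0: "complete_pattern b\<^sub>0" "w \<in> pattern_event b\<^sub>0"
    using assms pattern_event_exists unfolding typical_def by blast
  have other: "w \<notin> pattern_event b" if "complete_pattern b" "b \<noteq> b\<^sub>0" for b
    using complete_pattern_unique[OF that(1) b\<^sub>0(1)] b\<^sub>0(2) that(2) by blast
  show thesis
  proof (rule that[OF b\<^sub>0])
    fix f :: "bool list \<Rightarrow> ennreal"
    show "(\<integral>\<^sup>+b. (if complete_pattern b then indicator (pattern_event b) w * f b else 0)
        \<partial>count_space UNIV) = f b\<^sub>0"
      using b\<^sub>0 other by (subst nn_integral_count_space'[where A = "{b\<^sub>0}"]) auto
  qed
qed

lemma nn_integral_sum_patterns: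
  assumes "\<And>b. complete_pattern b \<Longrightarrow>
    (\<lambda>w. indicator (pattern_event b) w * g b w) \<in> borel_measurable sample_space"
  shows "(\<integral>\<^sup>+w. (\<integral>\<^sup>+b. (if complete_pattern b then indicator (pattern_event b) w * g b w else 0)
      \<partial>count_space UNIV) \<partial>sample_space)
    = (\<integral>\<^sup>+b. (if complete_pattern b then \<integral>\<^sup>+w. indicator (pattern_event b) w * g b w \<partial>sample_space
      else 0) \<partial>count_space UNIV)"
proof -
  have "(\<lambda>w. if complete_pattern b then indicator (pattern_event b) w * g b w else 0)
      \<in> borel_measurable sample_space" for b
    using assms by (cases "complete_pattern b") auto
  then show ?thesis
    by (subst nn_integral_count_space_nn_integral) (auto intro!: nn_integral_cong)
qed

definition sum_rejection_prob :: ennreal where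
  "sum_rejection_prob =
    (\<integral>\<^sup>+b. (if complete_pattern b then rejection_prob b else 0) \<partial>count_space UNIV)"

definition sum_card_rejection_prob :: ennreal where
  "sum_card_rejection_prob =
    (\<integral>\<^sup>+b. (if complete_pattern b then of_nat (card (false_positions b)) * rejection_prob b else 0)
      \<partial>count_space UNIV)"

lemma sum_rejection_prob_phase_prob: "sum_rejection_prob * phase_prob = 1"
proof -
  have "(1 :: ennreal) = (\<integral>\<^sup>+w. 1 \<partial>sample_space)"
    using prob_space.emeasure_space_1[OF prob_space_sample_space] by simp
  also have "\<dots> = (\<integral>\<^sup>+w. (\<integral>\<^sup>+b. (if complete_pattern b then indicator (pattern_event b) w * 1 else 0)
      \<partial>count_space UNIV) \<partial>sample_space)"
  proof (rule nn_integral_cong_AE, rule AE_mp[OF AE_typical], intro AE_I2 impI)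
    fix w assume "typical w"
    then show "1 = (\<integral>\<^sup>+b. (if complete_pattern b then indicator (pattern_event b) w * 1 else 0)
        \<partial>count_space UNIV)"
      by (rule typical_pattern) simp
  qed
  also have "\<dots> = (\<integral>\<^sup>+b. (if complete_pattern b then rejection_prob b else 0) * phase_prob
      \<partial>count_space UNIV)"
    by (subst nn_integral_sum_patterns)
       (auto simp: borel_measurable_pattern_event nn_integral_pattern_event intro!: nn_integral_cong)
  also have "\<dots> = sum_rejection_prob * phase_prob"
    unfolding sum_rejection_prob_def by (rule nn_integral_multc) simp
  finally show ?thesis ..
qed

lemma card_Rset_pattern_event:
  assumes "complete_pattern b" "w \<in> pattern_event b" "inj w"
  shows "card (Rset c w n) = card (false_positions b)"
  using Rset_pattern_event[OF assms] assms(3) by (simp add: card_image inj_on_subset[of w UNIV])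

lemma card_Sset_Int_pattern_event:
  assumes "complete_pattern b" "w \<in> pattern_event b" "inj w"
  shows "card (Sset c w n \<inter> X n) = z_count b w"
proof -
  have "Sset c w n \<inter> X n = w ` {s \<in> true_positions b. w s \<in> X n}"
    using Sset_pattern_event[OF assms(1,2)] by auto
  then show ?thesis unfolding z_count_def using assms(3) by (simp add: card_image inj_on_subset[of w UNIV])
qed

lemma nn_integral_card_Rset:
  "(\<integral>\<^sup>+w. of_nat (card (Rset c w n)) \<partial>sample_space) = sum_card_rejection_prob * phase_prob"
proof -
  have "(\<integral>\<^sup>+w. of_nat (card (Rset c w n)) \<partial>sample_space)
      = (\<integral>\<^sup>+w. (\<integral>\<^sup>+b. (if complete_pattern b
          then indicator (pattern_event b) w * of_nat (card (false_positions b)) else 0)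
        \<partial>count_space UNIV) \<partial>sample_space)"
  proof (rule nn_integral_cong_AE, rule AE_mp[OF AE_typical], intro AE_I2 impI)
    fix w assume w: "typical w"
    obtain b where "complete_pattern b" "w \<in> pattern_event b"
      and eval: "\<And>f. (\<integral>\<^sup>+b. (if complete_pattern b then indicator (pattern_event b) w * f b else 0)
        \<partial>count_space UNIV) = f b"
      using typical_pattern[OF w] by blast
    with w show "of_nat (card (Rset c w n)) = (\<integral>\<^sup>+b. (if complete_pattern b
        then indicator (pattern_event b) w * of_nat (card (false_positions b)) else 0) \<partial>count_space UNIV)"
      by (simp add: eval card_Rset_pattern_event typical_def)
  qed
  also have "\<dots> = (\<integral>\<^sup>+b. (if complete_pattern b then of_nat (card (false_positions b)) * rejection_prob b
      else 0) * phase_prob \<partial>count_space UNIV)"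
  proof -
    have "(\<integral>\<^sup>+w. indicator (pattern_event b) w * of_nat (card (false_positions b)) \<partial>sample_space)
        = of_nat (card (false_positions b)) * rejection_prob b * phase_prob"
      if b: "complete_pattern b" for b
    proof -
      have "(\<integral>\<^sup>+w. indicator (pattern_event b) w * of_nat (card (false_positions b)) \<partial>sample_space)
          = (\<integral>\<^sup>+w. indicator (pattern_event b) w \<partial>sample_space) * of_nat (card (false_positions b))"
        by (rule nn_integral_multc) measurable
      also have "\<dots> = rejection_prob b * phase_prob * of_nat (card (false_positions b))"
        by (simp only: nn_integral_pattern_event[OF b])
      finally show ?thesis by (simp only: ac_simps)
    qed
    then show ?thesis
      by (subst nn_integral_sum_patterns) (measurable, auto intro!: nn_integral_cong)
  qed
  also have "\<dots> = sum_card_rejection_prob * phase_prob"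
    unfolding sum_card_rejection_prob_def by (rule nn_integral_multc) simp
  finally show ?thesis .
qed

lemma emeasure_card_Sset_Int:
  "emeasure sample_space {w \<in> space sample_space. card (Sset c w n \<inter> X n) = k}
    = sum_rejection_prob * z_phase_prob k"
proof -
  have "emeasure sample_space {w \<in> space sample_space. card (Sset c w n \<inter> X n) = k}
      = (\<integral>\<^sup>+w. indicator {w. card (Sset c w n \<inter> X n) = k} w \<partial>sample_space)"
    using sets_card_Sset_Int[of "X n" c n k] by simp
  also have "\<dots> = (\<integral>\<^sup>+w. (\<integral>\<^sup>+b. (if complete_pattern b
          then indicator (pattern_event b) w * indicator {w. z_count b w = k} w else 0)
        \<partial>count_space UNIV) \<partial>sample_space)"
  proof (rule nn_integral_cong_AE, rule AE_mp[OF AE_typical], intro AE_I2 impI)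
    fix w assume w: "typical w"
    obtain b where "complete_pattern b" "w \<in> pattern_event b"
      and eval: "\<And>f. (\<integral>\<^sup>+b. (if complete_pattern b then indicator (pattern_event b) w * f b else 0)
        \<partial>count_space UNIV) = f b"
      using typical_pattern[OF w] by blast
    with w show "indicator {w. card (Sset c w n \<inter> X n) = k} w = (\<integral>\<^sup>+b. (if complete_pattern b
        then indicator (pattern_event b) w * indicator {w. z_count b w = k} w else 0) \<partial>count_space UNIV)"
      by (simp add: eval card_Sset_Int_pattern_event typical_def indicator_def)
  qed
  also have "\<dots> = (\<integral>\<^sup>+b. (if complete_pattern b then rejection_prob b else 0) * z_phase_prob k
      \<partial>count_space UNIV)"
    by (subst nn_integral_sum_patterns)
       (auto simp: borel_measurable_pattern_event_z_count nn_integral_pattern_event_z_count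
         intro!: nn_integral_cong)
  also have "\<dots> = sum_rejection_prob * z_phase_prob k"
    unfolding sum_rejection_prob_def by (rule nn_integral_multc) simp
  finally show ?thesis .
qed

lemma exists_undominated:
  assumes b: "complete_pattern b" and w: "w \<in> pattern_event b" "inj w" "\<forall>t. w t \<in> Xbox"
    and r: "r \<in> Rset c w n" "r \<notin> DS (Sset c w n \<inter> X n)"
  shows "\<exists>t\<^sub>0\<in>false_positions b. undominated b t\<^sub>0 w"
proof -
  obtain t\<^sub>0 where t\<^sub>0: "t\<^sub>0 \<in> false_positions b" "r = w t\<^sub>0"
    using r(1) Rset_pattern_event[OF b w(1,2)] by auto
  have "undominated b t\<^sub>0 w"
    unfolding undominated_def
  proof (intro ballI impI notI)
    fix s assume "s \<in> true_positions b" "w s \<in> X n" "prec (w t\<^sub>0) (w s)"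
    then have "w s \<in> Sset c w n \<inter> X n" "w t\<^sub>0 \<in> Dn (w s)"
      using Sset_pattern_event[OF b w(1)] w(3) by (auto simp: Dn_def)
    then show False using r(2) t\<^sub>0(2) by (auto simp: DS_def)
  qed
  with t\<^sub>0 show ?thesis by blast
qed

lemma indicator_undominated_rejected_le:
  assumes w: "typical w"
  shows "indicator {w. (\<exists>r \<in> Rset c w n. r \<notin> DS (Sset c w n \<inter> X n))
      \<and> card (Sset c w n \<inter> X n) = k} w
    \<le> (\<integral>\<^sup>+b. (if complete_pattern b then indicator (pattern_event b) w
        * (\<Sum>t\<^sub>0\<in>false_positions b. indicator {w. z_count b w = k \<and> undominated b t\<^sub>0 w} w) else 0)
      \<partial>count_space UNIV)"
proof -
  let ?U = "\<lambda>b t\<^sub>0. indicator {w. z_count b w = k \<and> undominated b t\<^sub>0 w} w :: ennreal"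
  obtain b where b: "complete_pattern b" "w \<in> pattern_event b"
    and eval: "\<And>f. (\<integral>\<^sup>+b. (if complete_pattern b then indicator (pattern_event b) w * f b else 0)
      \<partial>count_space UNIV) = f b"
    using typical_pattern[OF w] by blast
  have "indicator {w. (\<exists>r \<in> Rset c w n. r \<notin> DS (Sset c w n \<inter> X n))
      \<and> card (Sset c w n \<inter> X n) = k} w \<le> (\<Sum>t\<^sub>0\<in>false_positions b. ?U b t\<^sub>0)"
  proof (cases "(\<exists>r \<in> Rset c w n. r \<notin> DS (Sset c w n \<inter> X n)) \<and> card (Sset c w n \<inter> X n) = k")
    case True
    then obtain t\<^sub>0 where "t\<^sub>0 \<in> false_positions b" "?U b t\<^sub>0 = 1"
      using exists_undominated[OF b] card_Sset_Int_pattern_event[OF b] w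
      by (fastforce simp: typical_def)
    then show ?thesis
      using member_le_sum[where i = t\<^sub>0 and A = "false_positions b" and f = "?U b"] True by simp
  qed simp
  then show ?thesis by (simp add: eval)
qed

lemma nn_integral_undominated_rejected_le:
  assumes b: "complete_pattern b"
  shows "(\<integral>\<^sup>+w. indicator (pattern_event b) w
      * (\<Sum>t\<^sub>0\<in>false_positions b. indicator {w. z_count b w = k \<and> undominated b t\<^sub>0 w} w) \<partial>sample_space)
    \<le> of_nat (card (false_positions b)) * rejection_prob b
      * (ennreal (1 - c n / measure mu (X n)) ^ k * z_phase_prob k)"
proof -
  have "(\<integral>\<^sup>+w. indicator (pattern_event b) w
      * (\<Sum>t\<^sub>0\<in>false_positions b. indicator {w. z_count b w = k \<and> undominated b t\<^sub>0 w} w) \<partial>sample_space)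
    = (\<Sum>t\<^sub>0\<in>false_positions b. \<integral>\<^sup>+w. indicator (pattern_event b) w
      * indicator {w. z_count b w = k \<and> undominated b t\<^sub>0 w} w \<partial>sample_space)"
    unfolding sum_distrib_left
    by (rule nn_integral_sum) (use borel_measurable_undominated[OF b] in auto)
  also have "\<dots> \<le> (\<Sum>t\<^sub>0\<in>false_positions b.
      ennreal (1 - c n / measure mu (X n)) ^ k * (rejection_prob b * z_phase_prob k))"
    using nn_integral_undominated_le[OF b] nn_integral_pattern_event_z_count[OF b]
    by (intro sum_mono) auto
  finally show ?thesis by (simp add: ac_simps)
qed

lemma emeasure_undominated_rejected_le:
  "emeasure sample_space
     {w \<in> space sample_space. (\<exists>r \<in> Rset c w n. r \<notin> DS (Sset c w n \<inter> X n))
        \<and> card (Sset c w n \<inter> X n) = k}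
   \<le> sum_card_rejection_prob * (ennreal (1 - c n / measure mu (X n)) ^ k * z_phase_prob k)"
proof -
  let ?E = "{w. (\<exists>r \<in> Rset c w n. r \<notin> DS (Sset c w n \<inter> X n)) \<and> card (Sset c w n \<inter> X n) = k}"
  let ?V = "\<lambda>b w. \<Sum>t\<^sub>0\<in>false_positions b. indicator {w. z_count b w = k \<and> undominated b t\<^sub>0 w} w
    :: ennreal"
  have "emeasure sample_space ?E \<le> (\<integral>\<^sup>+w. indicator ?E w \<partial>sample_space)"
    by (cases "?E \<in> sets sample_space") (simp_all add: emeasure_notin_sets)
  also have "\<dots> \<le> (\<integral>\<^sup>+w. (\<integral>\<^sup>+b. (if complete_pattern b then indicator (pattern_event b) w * ?V b w
      else 0) \<partial>count_space UNIV) \<partial>sample_space)"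
    by (rule nn_integral_mono_AE, rule AE_mp[OF AE_typical])
       (simp add: indicator_undominated_rejected_le)
  also have "\<dots> = (\<integral>\<^sup>+b. (if complete_pattern b
      then \<integral>\<^sup>+w. indicator (pattern_event b) w * ?V b w \<partial>sample_space else 0) \<partial>count_space UNIV)"
  proof (rule nn_integral_sum_patterns)
    fix b assume "complete_pattern b"
    then show "(\<lambda>w. indicator (pattern_event b) w * ?V b w) \<in> borel_measurable sample_space"
      unfolding sum_distrib_left by (intro borel_measurable_sum borel_measurable_undominated)
  qed
  also have "\<dots> \<le> (\<integral>\<^sup>+b. (if complete_pattern b then of_nat (card (false_positions b)) * rejection_prob b
      else 0) * (ennreal (1 - c n / measure mu (X n)) ^ k * z_phase_prob k) \<partial>count_space UNIV)"
    by (intro nn_integral_mono) (simp add: nn_integral_undominated_rejected_le)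
  also have "\<dots> = sum_card_rejection_prob * (ennreal (1 - c n / measure mu (X n)) ^ k * z_phase_prob k)"
    unfolding sum_card_rejection_prob_def by (rule nn_integral_multc) simp
  finally show ?thesis by simp
qed

lemma miss_prob_power_le_exp:
  "ennreal (1 - c n / measure mu (X n)) ^ k \<le> ennreal (exp (- (real k * c n / measure mu (X n))))"
proof -
  define p where "p = c n / measure mu (X n)"
  have "0 \<le> 1 - p"
    using measure_thr_set_pos[of n] measure_thr_set_ge[OF n_ge_1] by (simp add: p_def)
  then have "(1 - p) ^ k \<le> exp (- p) ^ k"
    using exp_ge_add_one_self[of "- p"] by (intro power_mono) auto
  also have "\<dots> = exp (- (real k * c n / measure mu (X n)))"
    by (simp add: p_def exp_of_nat_mult[symmetric])
  finally have "ennreal ((1 - p) ^ k) \<le> ennreal (exp (- (real k * c n / measure mu (X n))))"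
    by (rule ennreal_leI)
  with \<open>0 \<le> 1 - p\<close> show ?thesis by (simp add: p_def ennreal_power)
qed

end

theorem lemma6:
  fixes c :: "nat \<Rightarrow> real" and n k :: nat
  assumes "\<forall>i\<ge>1. 0 < c i \<and> c i \<le> 1"
    and "\<forall>i j. 1 \<le> i \<longrightarrow> i \<le> j \<longrightarrow> c j \<le> c i"
    and "1 \<le> n"
  shows "emeasure sample_space
           {w \<in> space sample_space.
              (\<exists>r \<in> Rset c w n. r \<notin> DS (Sset c w n \<inter> thr_set c n))
              \<and> card (Sset c w n \<inter> thr_set c n) = k}
         \<le> ennreal (exp (- (real k * c n / measure mu (thr_set c n))))
           * (\<integral>\<^sup>+ w. of_nat (card (Rset c w n)) \<partial>sample_space)
           * emeasure sample_space {w \<in> space sample_space. card (Sset c w n \<inter> thr_set c n) = k}"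
proof -
  interpret threshold_rule c n using assms by unfold_locales
  define E where "E = ennreal (exp (- (real k * c n / measure mu (X n))))"
  have "emeasure sample_space
           {w \<in> space sample_space.
              (\<exists>r \<in> Rset c w n. r \<notin> DS (Sset c w n \<inter> X n)) \<and> card (Sset c w n \<inter> X n) = k}
      \<le> sum_card_rejection_prob * (ennreal (1 - c n / measure mu (X n)) ^ k * z_phase_prob k)"
    by (rule emeasure_undominated_rejected_le)
  also have "\<dots> \<le> sum_card_rejection_prob * (E * z_phase_prob k)"
    unfolding E_def by (intro mult_left_mono mult_right_mono miss_prob_power_le_exp) simp_all
  also have "\<dots> = E * (sum_card_rejection_prob * z_phase_prob k) * (sum_rejection_prob * phase_prob)"
    unfolding sum_rejection_prob_phase_prob by (simp add: ac_simps)
  also have "\<dots> = E * (sum_card_rejection_prob * phase_prob) * (sum_rejection_prob * z_phase_prob k)"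
    by (simp only: ac_simps)
  also have "\<dots> = E * (\<integral>\<^sup>+ w. of_nat (card (Rset c w n)) \<partial>sample_space)
      * emeasure sample_space {w \<in> space sample_space. card (Sset c w n \<inter> X n) = k}"
    by (simp only: nn_integral_card_Rset emeasure_card_Sset_Int)
  finally show ?thesis unfolding E_def .
qed

end
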